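(* Let $(M,\mathcal F,D,g)$ be a foliated Hessian structure of constant normal Hessian sectional curvature $c$. Then the foliated Riemannian manifold $(M,\mathcal F,g)$ is modeled on a space form of constant sectional curvature $-\frac c4$, i.e. the normal Riemannian metric $g$ (equivalently the induced transverse metric) has constant sectional curvature $-\frac c4$.
   Context: $N(M,\mathcal F)=TM/T\mathcal F$. Foliated Hessian structure $(D,g)$: $D$ a flat torsion-free foliated connection in the normal bundle (adapted foliated affine coordinates $(x,y)$: adapted charts with affine transverse coordinate changes and $\overline{\partial/\partial y^i}$ $D$-parallel), $g$ a foliated Riemannian metric in the normal bundle with locally $g_{ij}=\partial^2h/\partial y^i\partial y^j$ for a function $h$ of $y$ only. $\gamma=\nabla-D$ with $\nabla$ the normal Levi-Civita connection of $g$; $Q=D\gamma$, $Q^i_{jkl}=\partial\gamma^i_{jl}/\partial y^k$, indices raised/lowered by $g$. $\hat Q(\xi)^{ik}=Q^i{}_j{}^k{}_l\xi^{jl}$ on symmetric contravariant normal 2-tensors $\xi$; the normal Hessian sectional curvature is $q(\xi)=\langle\hat Q(\xi),\xi\rangle/\langle\xi,\xi\rangle$, inner product induced by $g$; constant $c$ means $q\equiv c$. *)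

theory Defs
  imports "HOL-Analysis.Analysis"
begin

text \<open>Local model: transverse affine coordinates y ranging over an open set U of
  real^'n (the normal bundle has rank CARD('n)). All tensors are given by their
  components in the D-parallel frame of coordinate vector fields.\<close>

definition pd :: "'n::finite \<Rightarrow> (real^'n \<Rightarrow> real) \<Rightarrow> real^'n \<Rightarrow> real" where
  "pd i f y = frechet_derivative f (at y) (axis i 1)"

fun Ck_on :: "nat \<Rightarrow> (real^'n::finite) set \<Rightarrow> (real^'n \<Rightarrow> real) \<Rightarrow> bool" where
  "Ck_on 0 U f = continuous_on U f"
| "Ck_on (Suc k) U f = (f differentiable_on U \<and> (\<forall>i. Ck_on k U (pd i f)))"

definition smooth_on :: "(real^'n::finite) set \<Rightarrow> (real^'n \<Rightarrow> real) \<Rightarrow> bool" where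
  "smooth_on U f = (\<forall>k. Ck_on k U f)"

definition hess_metric :: "(real^'n::finite \<Rightarrow> real) \<Rightarrow> 'n \<Rightarrow> 'n \<Rightarrow> real^'n \<Rightarrow> real" where
  "hess_metric h i j = pd i (pd j h)"

definition metric_mat :: "('n::finite \<Rightarrow> 'n \<Rightarrow> real^'n \<Rightarrow> real) \<Rightarrow> real^'n \<Rightarrow> real^'n^'n" where
  "metric_mat g y = (\<chi> i j. g i j y)"

definition ginv :: "('n::finite \<Rightarrow> 'n \<Rightarrow> real^'n \<Rightarrow> real) \<Rightarrow> 'n \<Rightarrow> 'n \<Rightarrow> real^'n \<Rightarrow> real" where
  "ginv g i j y = matrix_inv (metric_mat g y) $ i $ j"

definition LC :: "('n::finite \<Rightarrow> 'n \<Rightarrow> real^'n \<Rightarrow> real) \<Rightarrow> 'n \<Rightarrow> 'n \<Rightarrow> 'n \<Rightarrow> real^'n \<Rightarrow> real" where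
  "LC g i j k y = (1/2) * (\<Sum>l\<in>UNIV. ginv g i l y *
       (pd j (g l k) y + pd k (g l j) y - pd l (g j k) y))"

text \<open>gamma = nabla - D; D has vanishing Christoffel symbols in affine coordinates.\<close>
definition gam :: "('n::finite \<Rightarrow> 'n \<Rightarrow> real^'n \<Rightarrow> real) \<Rightarrow> 'n \<Rightarrow> 'n \<Rightarrow> 'n \<Rightarrow> real^'n \<Rightarrow> real" where
  "gam g i j k y = LC g i j k y - 0"

definition Qt :: "('n::finite \<Rightarrow> 'n \<Rightarrow> real^'n \<Rightarrow> real) \<Rightarrow> 'n \<Rightarrow> 'n \<Rightarrow> 'n \<Rightarrow> 'n \<Rightarrow> real^'n \<Rightarrow> real" where
  "Qt g i j k l y = pd k (gam g i j l) y"

definition Qup :: "('n::finite \<Rightarrow> 'n \<Rightarrow> real^'n \<Rightarrow> real) \<Rightarrow> 'n \<Rightarrow> 'n \<Rightarrow> 'n \<Rightarrow> 'n \<Rightarrow> real^'n \<Rightarrow> real" where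
  "Qup g i j k l y = (\<Sum>m\<in>UNIV. Qt g i j m l y * ginv g m k y)"

definition Qhat :: "('n::finite \<Rightarrow> 'n \<Rightarrow> real^'n \<Rightarrow> real) \<Rightarrow> real^'n \<Rightarrow> ('n \<Rightarrow> 'n \<Rightarrow> real) \<Rightarrow> 'n \<Rightarrow> 'n \<Rightarrow> real" where
  "Qhat g y \<xi> i k = (\<Sum>j\<in>UNIV. \<Sum>l\<in>UNIV. Qup g i j k l y * \<xi> j l)"

definition tinner :: "('n::finite \<Rightarrow> 'n \<Rightarrow> real^'n \<Rightarrow> real) \<Rightarrow> real^'n \<Rightarrow> ('n \<Rightarrow> 'n \<Rightarrow> real) \<Rightarrow> ('n \<Rightarrow> 'n \<Rightarrow> real) \<Rightarrow> real" where
  "tinner g y \<xi> \<eta> = (\<Sum>i\<in>UNIV. \<Sum>k\<in>UNIV. \<Sum>a\<in>UNIV. \<Sum>b\<in>UNIV.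
       g i a y * g k b y * \<xi> i k * \<eta> a b)"

definition hess_sec_curv :: "('n::finite \<Rightarrow> 'n \<Rightarrow> real^'n \<Rightarrow> real) \<Rightarrow> real^'n \<Rightarrow> ('n \<Rightarrow> 'n \<Rightarrow> real) \<Rightarrow> real" where
  "hess_sec_curv g y \<xi> = tinner g y (Qhat g y \<xi>) \<xi> / tinner g y \<xi> \<xi>"

definition sym_tensor :: "('n \<Rightarrow> 'n \<Rightarrow> real) \<Rightarrow> bool" where
  "sym_tensor \<xi> = (\<forall>i j. \<xi> i j = \<xi> j i)"

text \<open>Riemann tensor: R(d_k, d_l) d_j = sum_i Rm i j k l d_i, with
  R(X,Y)Z = nabla_X nabla_Y Z - nabla_Y nabla_X Z - nabla_[X,Y] Z.\<close>
definition Rm :: "('n::finite \<Rightarrow> 'n \<Rightarrow> real^'n \<Rightarrow> real) \<Rightarrow> 'n \<Rightarrow> 'n \<Rightarrow> 'n \<Rightarrow> 'n \<Rightarrow> real^'n \<Rightarrow> real" where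
  "Rm g i j k l y = pd k (LC g i l j) y - pd l (LC g i k j) y
     + (\<Sum>m\<in>UNIV. LC g i k m y * LC g m l j y - LC g i l m y * LC g m k j y)"

definition gform :: "('n::finite \<Rightarrow> 'n \<Rightarrow> real^'n \<Rightarrow> real) \<Rightarrow> real^'n \<Rightarrow> real^'n \<Rightarrow> real^'n \<Rightarrow> real" where
  "gform g y X Y = (\<Sum>i\<in>UNIV. \<Sum>j\<in>UNIV. g i j y * X$i * Y$j)"

definition sec_curv :: "('n::finite \<Rightarrow> 'n \<Rightarrow> real^'n \<Rightarrow> real) \<Rightarrow> real^'n \<Rightarrow> real^'n \<Rightarrow> real^'n \<Rightarrow> real" where
  "sec_curv g y X Y =
     (\<Sum>a\<in>UNIV. \<Sum>i\<in>UNIV. \<Sum>j\<in>UNIV. \<Sum>k\<in>UNIV. \<Sum>l\<in>UNIV.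
        g i a y * Rm g i j k l y * X$k * Y$l * Y$j * X$a)
     / (gform g y X X * gform g y Y Y - (gform g y X Y)^2)"

end

theory Submission
  imports Defs
begin

(* In affine coordinates g_ij = d_i d_j h, so A_ijk = d_k g_ij and B_ijkl = d_l d_k g_ij are
   totally symmetric, and Gamma^i_jk = 1/2 g^il A_ljk.  With AA_abjl = A_abr g^rs A_sjl,
   lowering indices gives
     <Qhat xi, xi> = 1/2 B(xi, xi) - 1/2 AA(xi, xi),
     R(X, Y, Y, X) = 1/4 (AA(X, Y, X, Y) - AA(X, X, Y, Y)).
   Evaluating <Qhat xi, xi> = c |xi|^2 at xi = X X, Y Y, X X + Y Y and X Y + Y X eliminates
   the totally symmetric B and leaves AA(X, X, Y, Y) - AA(X, Y, X, Y) = c (|X|^2 |Y|^2 - g(X, Y)^2),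
   so R(X, Y, Y, X) is -c/4 times the Gram determinant of X and Y. *)

lemma pd_has_derivative: "(f has_derivative f') (at y) \<Longrightarrow> pd i f y = f' (axis i 1)"
  unfolding pd_def by (metis frechet_derivative_at)

lemma pd_cong_open:
  assumes "open U" "y \<in> U" "\<And>x. x \<in> U \<Longrightarrow> f x = g x"
  shows "pd i f y = pd i g y"
proof -
  have "(f has_derivative D) (at y) \<longleftrightarrow> (g has_derivative D) (at y)" for D
    using has_derivative_transform_within_open[OF _ assms(1,2)] assms(3) by metis
  then show ?thesis
    unfolding pd_def frechet_derivative_def by simp
qed

lemma pd_const: "pd i (\<lambda>x. c) y = 0"
proof -
  have "((\<lambda>x. c) has_derivative (\<lambda>v. 0)) (at y)"
    by simp
  from pd_has_derivative[OF this] show ?thesis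
    by simp
qed

lemma pd_cmult:
  assumes "f differentiable (at y)"
  shows "pd i (\<lambda>x. c * f x) y = c * pd i f y"
  using pd_has_derivative[OF has_derivative_mult_right[OF assms[unfolded frechet_derivative_works]]]
  by (simp add: pd_def)

lemma pd_mult:
  assumes "f differentiable (at y)" "g differentiable (at y)"
  shows "pd i (\<lambda>x. f x * g x) y = pd i f y * g y + f y * pd i g y"
  using pd_has_derivative[OF has_derivative_mult[OF assms[unfolded frechet_derivative_works]]]
  by (simp add: pd_def)

lemma pd_diff:
  assumes "f differentiable (at y)" "g differentiable (at y)"
  shows "pd i (\<lambda>x. f x - g x) y = pd i f y - pd i g y"
  using pd_has_derivative[OF has_derivative_diff[OF assms[unfolded frechet_derivative_works]]]
  by (simp add: pd_def)

lemma pd_sum: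
  assumes "\<And>a. a \<in> S \<Longrightarrow> f a differentiable (at y)"
  shows "pd i (\<lambda>x. \<Sum>a\<in>S. f a x) y = (\<Sum>a\<in>S. pd i (f a) y)"
proof -
  have "((\<lambda>x. \<Sum>a\<in>S. f a x) has_derivative (\<lambda>v. \<Sum>a\<in>S. frechet_derivative (f a) (at y) v)) (at y)"
    using assms by (intro has_derivative_sum) (simp add: frechet_derivative_works)
  from pd_has_derivative[OF this] show ?thesis
    by (simp add: pd_def)
qed

lemma pd_translate:
  assumes "f differentiable (at (x + v))"
  shows "pd i (\<lambda>x. f (x + v)) x = pd i f (x + v)"
proof -
  have "((\<lambda>x. f (x + v)) has_derivative frechet_derivative f (at (x + v))) (at x)"
    using diff_chain_at[OF has_derivative_add_const[OF has_derivative_ident]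
        assms[unfolded frechet_derivative_works]]
    by (simp add: o_def)
  from pd_has_derivative[OF this] show ?thesis
    by (simp add: pd_def)
qed

lemma has_real_derivative_along_axis:
  assumes "f differentiable (at (a + s *\<^sub>R axis i 1))"
  shows "((\<lambda>s. f (a + s *\<^sub>R axis i 1)) has_real_derivative pd i f (a + s *\<^sub>R axis i 1)) (at s)"
proof -
  let ?D = "frechet_derivative f (at (a + s *\<^sub>R axis i 1))"
  have "((\<lambda>s. a + s *\<^sub>R axis i 1) has_derivative (\<lambda>t. t *\<^sub>R axis i 1)) (at s)"
    by (auto intro!: derivative_eq_intros)
  from diff_chain_at[OF this assms[unfolded frechet_derivative_works]]
  have "((\<lambda>s. f (a + s *\<^sub>R axis i 1)) has_derivative (\<lambda>t. ?D (t *\<^sub>R axis i 1))) (at s)"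
    by (simp add: o_def)
  moreover have "linear ?D"
    using assms[unfolded frechet_derivative_works] by (rule has_derivative_linear)
  then have "?D (t *\<^sub>R axis i 1) = pd i f (a + s *\<^sub>R axis i 1) * t" for t
    by (simp add: linear_scale pd_def)
  ultimately show ?thesis
    unfolding has_field_derivative_def by simp
qed

lemma mean_value_along_axis:
  fixes f :: "real^'n::finite \<Rightarrow> real"
  assumes "0 < t" "\<And>s. 0 \<le> s \<Longrightarrow> s \<le> t \<Longrightarrow> f differentiable (at (a + s *\<^sub>R axis i 1))"
  obtains s where "0 < s" "s < t" "f (a + t *\<^sub>R axis i 1) - f a = t * pd i f (a + s *\<^sub>R axis i 1)"
proof -
  have "\<exists>s>0. s < t \<and> f (a + t *\<^sub>R axis i 1) - f (a + 0 *\<^sub>R axis i 1)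
      = (t - 0) * pd i f (a + s *\<^sub>R axis i 1)"
    by (rule MVT2[OF assms(1)]) (simp add: assms(2) has_real_derivative_along_axis)
  with that show ?thesis by auto
qed

lemma smooth_on_pd: "smooth_on U f \<Longrightarrow> smooth_on U (pd i f)"
  unfolding smooth_on_def by (metis Ck_on.simps(2))

lemma smooth_on_differentiable_at:
  "open U \<Longrightarrow> smooth_on U f \<Longrightarrow> y \<in> U \<Longrightarrow> f differentiable (at y)"
  unfolding smooth_on_def by (metis Ck_on.simps(2) at_within_open differentiable_on_def)

lemma smooth_on_isCont: "open U \<Longrightarrow> smooth_on U f \<Longrightarrow> y \<in> U \<Longrightarrow> isCont f y"
  unfolding smooth_on_def by (metis Ck_on.simps(1) continuous_on_eq_continuous_at)

lemma mean_value_translate_difference: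
  fixes f :: "real^'n::finite \<Rightarrow> real"
  assumes "0 < t"
    and "\<And>s. 0 \<le> s \<Longrightarrow> s \<le> t \<Longrightarrow> f differentiable (at (a + s *\<^sub>R axis i 1))"
    and "\<And>s. 0 \<le> s \<Longrightarrow> s \<le> t \<Longrightarrow> f differentiable (at (a + s *\<^sub>R axis i 1 + v))"
  obtains s where "0 < s" "s < t"
    "f (a + t *\<^sub>R axis i 1 + v) - f (a + t *\<^sub>R axis i 1) - f (a + v) + f a
       = t * (pd i f (a + s *\<^sub>R axis i 1 + v) - pd i f (a + s *\<^sub>R axis i 1))"
proof -
  define F where "F x = f (x + v) - f x" for x
  have F: "F differentiable (at (a + s *\<^sub>R axis i 1))"
    "pd i F (a + s *\<^sub>R axis i 1) = pd i f (a + s *\<^sub>R axis i 1 + v) - pd i f (a + s *\<^sub>R axis i 1)"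
    if "0 \<le> s" "s \<le> t" for s
  proof -
    note f0 = assms(2)[OF that] and f1 = assms(3)[OF that]
    have "(\<lambda>x. f (x + v)) differentiable (at (a + s *\<^sub>R axis i 1))"
      using differentiable_compose[of f "\<lambda>x. x + v", OF f1] by simp
    then show "F differentiable (at (a + s *\<^sub>R axis i 1))"
      "pd i F (a + s *\<^sub>R axis i 1) = pd i f (a + s *\<^sub>R axis i 1 + v) - pd i f (a + s *\<^sub>R axis i 1)"
      unfolding F_def using f0 pd_diff[OF _ f0] pd_translate[OF f1] by simp_all
  qed
  obtain s where s: "0 < s" "s < t" "F (a + t *\<^sub>R axis i 1) - F a = t * pd i F (a + s *\<^sub>R axis i 1)"
    by (rule mean_value_along_axis[OF assms(1), of F a i]) (use F(1) in auto)
  show ?thesis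
  proof (rule that[OF s(1,2)])
    show "f (a + t *\<^sub>R axis i 1 + v) - f (a + t *\<^sub>R axis i 1) - f (a + v) + f a
       = t * (pd i f (a + s *\<^sub>R axis i 1 + v) - pd i f (a + s *\<^sub>R axis i 1))"
      using s(3) F(2)[of s] s(1,2) unfolding F_def by (simp add: algebra_simps)
  qed
qed

lemma second_difference_mean_value:
  fixes f :: "real^'n::finite \<Rightarrow> real"
  assumes "open U" "smooth_on U f" "cball y (2 * t) \<subseteq> U" "0 < t"
  obtains P where "dist P y \<le> 2 * t"
    "f (y + t *\<^sub>R axis i 1 + t *\<^sub>R axis j 1) - f (y + t *\<^sub>R axis i 1) - f (y + t *\<^sub>R axis j 1) + f y
       = t\<^sup>2 * pd j (pd i f) P"
proof -
  define ei ej :: "real^'n" where "ei = axis i 1" and "ej = axis j 1"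
  have near: "dist (y + s *\<^sub>R ei + u *\<^sub>R ej) y \<le> 2 * t"
    if "0 \<le> s" "s \<le> t" "0 \<le> u" "u \<le> t" for s u
  proof -
    have "norm (s *\<^sub>R ei + u *\<^sub>R ej) \<le> norm (s *\<^sub>R ei) + norm (u *\<^sub>R ej)"
      by (rule norm_triangle_ineq)
    with that show ?thesis
      by (simp add: dist_norm ei_def ej_def add.assoc)
  qed
  have diff: "f differentiable (at (y + s *\<^sub>R ei + u *\<^sub>R ej))"
    and diff_i: "pd i f differentiable (at (y + s *\<^sub>R ei + u *\<^sub>R ej))"
    if "0 \<le> s" "s \<le> t" "0 \<le> u" "u \<le> t" for s u
  proof -
    have "y + s *\<^sub>R ei + u *\<^sub>R ej \<in> U"
      using near[OF that] assms(3) by (auto simp: dist_commute)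
    then show "f differentiable (at (y + s *\<^sub>R ei + u *\<^sub>R ej))"
      "pd i f differentiable (at (y + s *\<^sub>R ei + u *\<^sub>R ej))"
      using smooth_on_differentiable_at[OF assms(1)] smooth_on_pd[OF assms(2)] assms(2) by simp_all
  qed
  obtain s where s: "0 < s" "s < t"
    "f (y + t *\<^sub>R ei + t *\<^sub>R ej) - f (y + t *\<^sub>R ei) - f (y + t *\<^sub>R ej) + f y
       = t * (pd i f (y + s *\<^sub>R ei + t *\<^sub>R ej) - pd i f (y + s *\<^sub>R ei))"
    by (rule mean_value_translate_difference[OF assms(4), of f y i "t *\<^sub>R ej"])
      (use diff[of _ 0] diff[of _ t] assms(4) in \<open>auto simp: ei_def\<close>)
  obtain u where u: "0 < u" "u < t"
    "pd i f (y + s *\<^sub>R ei + t *\<^sub>R ej) - pd i f (y + s *\<^sub>R ei) = t * pd j (pd i f) (y + s *\<^sub>R ei + u *\<^sub>R ej)"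
    by (rule mean_value_along_axis[OF assms(4), of "pd i f" "y + s *\<^sub>R ei" j])
      (use diff_i[of s] s in \<open>auto simp: ej_def\<close>)
  show ?thesis
  proof
    show "dist (y + s *\<^sub>R ei + u *\<^sub>R ej) y \<le> 2 * t"
      using near s u by simp
    show "f (y + t *\<^sub>R axis i 1 + t *\<^sub>R axis j 1) - f (y + t *\<^sub>R axis i 1) - f (y + t *\<^sub>R axis j 1) + f y
       = t\<^sup>2 * pd j (pd i f) (y + s *\<^sub>R ei + u *\<^sub>R ej)"
      using s(3) u(3) unfolding ei_def ej_def by (simp add: power2_eq_square)
  qed
qed

(* Schwarz: both mixed partials are limits of the same second difference quotient. *)
lemma pd_commute:
  assumes "open U" "smooth_on U f" "y \<in> U"
  shows "pd j (pd i f) y = pd i (pd j f) y"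
proof (rule ccontr)
  let ?a = "pd j (pd i f)" and ?b = "pd i (pd j f)"
  define e where "e = \<bar>?a y - ?b y\<bar> / 2"
  assume "?a y \<noteq> ?b y"
  then have "e > 0"
    by (simp add: e_def)
  obtain r where r: "r > 0" "cball y r \<subseteq> U"
    using assms(1,3) open_contains_cball by blast
  have "isCont ?a y" "isCont ?b y"
    using assms by (simp_all add: smooth_on_isCont smooth_on_pd)
  then obtain d1 d2 where d: "d1 > 0" "\<forall>x. dist x y < d1 \<longrightarrow> dist (?a x) (?a y) < e"
    "d2 > 0" "\<forall>x. dist x y < d2 \<longrightarrow> dist (?b x) (?b y) < e"
    using \<open>e > 0\<close> unfolding continuous_at_eps_delta by blast
  define t where "t = min r (min d1 d2) / 3"
  have t: "0 < t" "2 * t \<le> r" "2 * t < d1" "2 * t < d2"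
    using r d unfolding t_def by auto
  have ball: "cball y (2 * t) \<subseteq> U"
    using subset_cball[OF t(2)] r(2) by (rule order_trans)
  obtain P where P: "dist P y \<le> 2 * t"
    "f (y + t *\<^sub>R axis i 1 + t *\<^sub>R axis j 1) - f (y + t *\<^sub>R axis i 1) - f (y + t *\<^sub>R axis j 1) + f y
       = t\<^sup>2 * ?a P"
    using second_difference_mean_value[OF assms(1,2) ball t(1)] by blast
  obtain Q where Q: "dist Q y \<le> 2 * t"
    "f (y + t *\<^sub>R axis j 1 + t *\<^sub>R axis i 1) - f (y + t *\<^sub>R axis j 1) - f (y + t *\<^sub>R axis i 1) + f y
       = t\<^sup>2 * ?b Q"
    using second_difference_mean_value[OF assms(1,2) ball t(1)] by blast
  have swap: "y + t *\<^sub>R axis j 1 + t *\<^sub>R axis i 1 = y + t *\<^sub>R axis i 1 + t *\<^sub>R axis j (1::real)"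
    by (simp add: algebra_simps)
  have "t\<^sup>2 * ?a P = t\<^sup>2 * ?b Q"
    using P(2) Q(2)[unfolded swap] by linarith
  then have "?a P = ?b Q"
    using t(1) by simp
  moreover have "dist (?a P) (?a y) < e" "dist (?b Q) (?b y) < e"
    using d(2)[rule_format, of P] d(4)[rule_format, of Q] P(1) Q(1) t(3,4) by linarith+
  ultimately show False
    unfolding e_def dist_real_def by (auto simp: abs_if split: if_splits)
qed

lemma matrix_inv_two_sided:
  fixes M :: "'a::field^'n::finite^'n"
  assumes "\<And>v. M *v v = 0 \<Longrightarrow> v = 0"
  shows "M ** matrix_inv M = mat 1" and "matrix_inv M ** M = mat 1"
proof -
  have "\<exists>M'. M' ** M = mat 1"
    using assms by (simp add: matrix_left_invertible_ker)
  then have "\<exists>M'. M ** M' = mat 1 \<and> M' ** M = mat 1"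
    using matrix_left_right_inverse by auto
  then have "M ** matrix_inv M = mat 1 \<and> matrix_inv M ** M = mat 1"
    unfolding matrix_inv_def by (rule someI_ex)
  then show "M ** matrix_inv M = mat 1" and "matrix_inv M ** M = mat 1"
    by auto
qed

lemma matrix_inv_cramer:
  fixes M :: "'a::field^'n::finite^'n"
  assumes "M ** matrix_inv M = mat 1" and "det M \<noteq> 0"
  shows "matrix_inv M $ i $ j = det (\<chi> a b. if b = i then axis j 1 $ a else M $ a $ b) / det M"
proof -
  define v where "v = matrix_inv M *v axis j 1"
  have "M *v v = axis j 1"
    unfolding v_def by (simp add: matrix_vector_mul_assoc assms(1))
  then have "v $ i = det (\<chi> a b. if b = i then axis j 1 $ a else M $ a $ b) / det M"
    using cramer[OF assms(2)] by simp
  moreover have "v $ i = matrix_inv M $ i $ j"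
    unfolding v_def matrix_vector_mult_def axis_def by (simp add: if_distrib cong: if_cong)
  ultimately show ?thesis
    by simp
qed

lemma differentiable_prod:
  fixes f :: "'i \<Rightarrow> 'a::real_normed_vector \<Rightarrow> 'b::real_normed_field"
  assumes "\<And>a. a \<in> S \<Longrightarrow> f a differentiable (at y)"
  shows "(\<lambda>x. \<Prod>a\<in>S. f a x) differentiable (at y)"
proof -
  have "(f a has_derivative frechet_derivative (f a) (at y)) (at y)" if "a \<in> S" for a
    by (rule iffD1[OF frechet_derivative_works assms[OF that]])
  then have "((\<lambda>x. \<Prod>a\<in>S. f a x) has_derivative
      (\<lambda>h. \<Sum>a\<in>S. frechet_derivative (f a) (at y) h * (\<Prod>b\<in>S - {a}. f b y))) (at y)"
    by (rule has_derivative_prod)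
  then show ?thesis
    unfolding differentiable_def by blast
qed

lemma differentiable_det:
  fixes F :: "'n::finite \<Rightarrow> 'n \<Rightarrow> 'a::real_normed_vector \<Rightarrow> real"
  assumes "\<And>a b. F a b differentiable (at y)"
  shows "(\<lambda>x. det (\<chi> a b. F a b x)) differentiable (at y)"
proof -
  have "(\<lambda>x. of_int (sign p) * (\<Prod>i\<in>UNIV. F i (p i) x)) differentiable (at y)" for p :: "'n \<Rightarrow> 'n"
    by (intro differentiable_mult differentiable_const differentiable_prod assms)
  then have "(\<lambda>x. \<Sum>p\<in>{p. p permutes UNIV}. of_int (sign p) * (\<Prod>i\<in>UNIV. F i (p i) x)) differentiable (at y)"
    by (intro differentiable_sum) (simp_all add: finite_permutations)
  then show ?thesis
    by (simp add: det_def)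
qed

lemma gform_eq_inner: "gform G y v w = v \<bullet> (metric_mat G y *v w)"
  by (simp add: gform_def inner_vec_def matrix_vector_mult_def metric_mat_def sum_distrib_left mult_ac)

lemma sum_kronecker:
  fixes f :: "'n::finite \<Rightarrow> 'a::comm_semiring_1"
  shows "(\<Sum>r\<in>UNIV. f r * (if r = j then 1 else 0)) = f j"
    and "(\<Sum>r\<in>UNIV. (if r = j then 1 else 0) * f r) = f j"
    and "(\<Sum>r\<in>UNIV. (if j = r then 1 else 0) * f r) = f j"
  by (simp_all add: mult_if_delta mult.commute[of "f _"])

lemma sum_swap_mult:
  fixes a :: "'a \<Rightarrow> 'b::semiring_0"
  shows "(\<Sum>r\<in>A. a r * (\<Sum>j\<in>B. b r j * c j)) = (\<Sum>j\<in>B. (\<Sum>r\<in>A. a r * b r j) * c j)"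
proof -
  have "(\<Sum>r\<in>A. a r * (\<Sum>j\<in>B. b r j * c j)) = (\<Sum>r\<in>A. \<Sum>j\<in>B. a r * b r j * c j)"
    by (simp add: sum_distrib_left mult.assoc)
  also have "\<dots> = (\<Sum>j\<in>B. \<Sum>r\<in>A. a r * b r j * c j)"
    by (rule sum.swap)
  also have "\<dots> = (\<Sum>j\<in>B. (\<Sum>r\<in>A. a r * b r j) * c j)"
    by (simp add: sum_distrib_right)
  finally show ?thesis .
qed

lemma sum_rotate3:
  "(\<Sum>j\<in>A. \<Sum>k\<in>B. \<Sum>l\<in>C. f j k l) = (\<Sum>k\<in>B. \<Sum>l\<in>C. \<Sum>j\<in>A. f j k l)"
  by (subst sum.swap, rule sum.cong[OF refl], rule sum.swap)

lemma sum_reverse3: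
  "(\<Sum>a\<in>A. \<Sum>b\<in>B. \<Sum>j\<in>C. f a b j) = (\<Sum>j\<in>C. \<Sum>b\<in>B. \<Sum>a\<in>A. f a b j)"
proof -
  have "(\<Sum>a\<in>A. \<Sum>b\<in>B. \<Sum>j\<in>C. f a b j) = (\<Sum>b\<in>B. \<Sum>j\<in>C. \<Sum>a\<in>A. f a b j)"
    by (rule sum_rotate3)
  also have "\<dots> = (\<Sum>j\<in>C. \<Sum>b\<in>B. \<Sum>a\<in>A. f a b j)"
    by (rule sum.swap)
  finally show ?thesis .
qed

lemma sum_rotate4:
  "(\<Sum>i\<in>A. \<Sum>j\<in>B. \<Sum>k\<in>C. \<Sum>l\<in>D. f i j k l) = (\<Sum>j\<in>B. \<Sum>k\<in>C. \<Sum>l\<in>D. \<Sum>i\<in>A. f i j k l)"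
  by (subst sum.swap, rule sum.cong[OF refl], subst sum.swap, rule sum.cong[OF refl], rule sum.swap)

lemma sum_swap_pairs:
  "(\<Sum>a\<in>A. \<Sum>b\<in>B. \<Sum>j\<in>C. \<Sum>l\<in>D. f a b j l) = (\<Sum>j\<in>C. \<Sum>l\<in>D. \<Sum>a\<in>A. \<Sum>b\<in>B. f a b j l)"
proof -
  have "(\<Sum>a\<in>A. \<Sum>b\<in>B. \<Sum>j\<in>C. \<Sum>l\<in>D. f a b j l) = (\<Sum>a\<in>A. \<Sum>j\<in>C. \<Sum>l\<in>D. \<Sum>b\<in>B. f a b j l)"
    by (rule sum.cong[OF refl], subst sum.swap, rule sum.cong[OF refl], rule sum.swap)
  also have "\<dots> = (\<Sum>j\<in>C. \<Sum>l\<in>D. \<Sum>a\<in>A. \<Sum>b\<in>B. f a b j l)"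
    by (subst sum.swap, rule sum.cong[OF refl], rule sum.swap)
  finally show ?thesis .
qed

definition tensor_eval ::
  "('n::finite \<Rightarrow> 'n \<Rightarrow> 'n \<Rightarrow> 'n \<Rightarrow> real) \<Rightarrow> ('n \<Rightarrow> real) \<Rightarrow> ('n \<Rightarrow> real) \<Rightarrow> ('n \<Rightarrow> real) \<Rightarrow> ('n \<Rightarrow> real) \<Rightarrow> real"
  where "tensor_eval K p q r s = (\<Sum>a\<in>UNIV. \<Sum>b\<in>UNIV. \<Sum>j\<in>UNIV. \<Sum>l\<in>UNIV. K a b j l * p a * q b * r j * s l)"

definition tensor_pair ::
  "('n::finite \<Rightarrow> 'n \<Rightarrow> 'n \<Rightarrow> 'n \<Rightarrow> real) \<Rightarrow> ('n \<Rightarrow> 'n \<Rightarrow> real) \<Rightarrow> ('n \<Rightarrow> 'n \<Rightarrow> real) \<Rightarrow> real"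
  where "tensor_pair K \<xi> \<eta> = (\<Sum>a\<in>UNIV. \<Sum>b\<in>UNIV. \<Sum>j\<in>UNIV. \<Sum>l\<in>UNIV. K a b j l * \<xi> a b * \<eta> j l)"

definition bilin :: "('n::finite \<Rightarrow> 'n \<Rightarrow> real) \<Rightarrow> ('n \<Rightarrow> real) \<Rightarrow> ('n \<Rightarrow> real) \<Rightarrow> real"
  where "bilin g p q = (\<Sum>i\<in>UNIV. \<Sum>j\<in>UNIV. g i j * p i * q j)"

lemma tensor_pair_rank_one:
  "tensor_pair K (\<lambda>a b. p a * q b) (\<lambda>a b. p a * q b) = tensor_eval K p q p q"
  unfolding tensor_pair_def tensor_eval_def by (simp add: mult_ac)

lemma tensor_pair_rank_two:
  "tensor_pair K (\<lambda>a b. p a * q b + p' a * q' b) (\<lambda>a b. p a * q b + p' a * q' b)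
   = tensor_eval K p q p q + tensor_eval K p q p' q' + tensor_eval K p' q' p q + tensor_eval K p' q' p' q'"
  unfolding tensor_pair_def tensor_eval_def by (simp add: algebra_simps sum.distrib)

lemma tensor_eval_linear:
  "tensor_eval (\<lambda>a b j l. u * K a b j l + v * L a b j l) p q r s
   = u * tensor_eval K p q r s + v * tensor_eval L p q r s"
  unfolding tensor_eval_def by (simp add: algebra_simps sum.distrib sum_distrib_left)

lemma tensor_eval_metric:
  "tensor_eval (\<lambda>a b j l. g a j * g b l) p q r s = bilin g p r * bilin g q s"
proof -
  have "tensor_eval (\<lambda>a b j l. g a j * g b l) p q r s
      = (\<Sum>a\<in>UNIV. \<Sum>j\<in>UNIV. \<Sum>b\<in>UNIV. \<Sum>l\<in>UNIV. (g a j * p a * r j) * (g b l * q b * s l))"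
    unfolding tensor_eval_def by (rule sum.cong[OF refl], rule trans[OF sum.swap]) (simp add: mult_ac)
  also have "\<dots> = (\<Sum>a\<in>UNIV. \<Sum>j\<in>UNIV. (g a j * p a * r j) * bilin g q s)"
    by (simp only: bilin_def sum_distrib_left)
  also have "\<dots> = bilin g p r * bilin g q s"
    by (simp only: bilin_def[of g p r] sum_distrib_right)
  finally show ?thesis .
qed

lemma tensor_eval_swap12:
  assumes "\<And>a b j l. K a b j l = K b a j l"
  shows "tensor_eval K p q r s = tensor_eval K q p r s"
  unfolding tensor_eval_def by (subst sum.swap) (simp add: assms[of _ _] mult_ac)

lemma tensor_eval_swap23:
  assumes "\<And>a b j l. K a b j l = K a j b l"
  shows "tensor_eval K p q r s = tensor_eval K p r q s"
  unfolding tensor_eval_def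
  by (rule sum.cong[OF refl], rule trans[OF sum.swap]) (simp add: assms[of _ _] mult_ac)

lemma tensor_eval_swap34:
  assumes "\<And>a b j l. K a b j l = K a b l j"
  shows "tensor_eval K p q r s = tensor_eval K p q s r"
  unfolding tensor_eval_def
  by (rule sum.cong[OF refl], rule sum.cong[OF refl], rule trans[OF sum.swap]) (simp add: assms[of _ _] mult_ac)

lemma tensor_eval_swap_pairs:
  assumes "\<And>a b j l. K a b j l = K j l a b"
  shows "tensor_eval K p q r s = tensor_eval K r s p q"
proof -
  have "tensor_eval K r s p q = (\<Sum>j\<in>UNIV. \<Sum>l\<in>UNIV. \<Sum>a\<in>UNIV. \<Sum>b\<in>UNIV. K a b j l * r a * s b * p j * q l)"
    unfolding tensor_eval_def by (rule sum_swap_pairs)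
  also have "\<dots> = tensor_eval K p q r s"
    unfolding tensor_eval_def by (intro sum.cong refl) (simp add: assms[of _ _] mult_ac)
  finally show ?thesis ..
qed

lemma bilin_sym:
  assumes "\<And>i j. g i j = g j i"
  shows "bilin g p q = bilin g q p"
  unfolding bilin_def by (rule trans[OF sum.swap]) (simp add: assms[of _ _] mult_ac)

lemma bilin_linear_combination:
  "bilin g (\<lambda>i. a * p i + b * q i) (\<lambda>i. a * p i + b * q i)
   = a * a * bilin g p p + a * b * bilin g p q + b * a * bilin g q p + b * b * bilin g q q"
  unfolding bilin_def by (simp add: algebra_simps sum.distrib sum_distrib_left)

lemma bilin_gram_pos:
  assumes sym: "\<And>i j. g i j = g j i"
    and pos: "\<And>v. v \<noteq> (\<lambda>_. 0) \<Longrightarrow> bilin g v v > 0"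
    and Y: "Y \<noteq> (\<lambda>_. 0)" and indep: "\<And>t. X \<noteq> (\<lambda>i. t * Y i)"
  shows "bilin g X X * bilin g Y Y - (bilin g X Y)\<^sup>2 > 0"
proof -
  have gY: "bilin g Y Y > 0"
    using pos[OF Y] .
  define v where "v i = bilin g Y Y * X i + (- bilin g X Y) * Y i" for i
  have "v \<noteq> (\<lambda>_. 0)"
  proof
    assume "v = (\<lambda>_. 0)"
    then have "X = (\<lambda>i. (bilin g X Y / bilin g Y Y) * Y i)"
      using gY by (auto simp: fun_eq_iff field_simps v_def dest: fun_cong)
    with indep show False
      by blast
  qed
  then have "bilin g v v > 0"
    by (rule pos)
  moreover have "bilin g v v = bilin g Y Y * (bilin g X X * bilin g Y Y - (bilin g X Y)\<^sup>2)"
    unfolding v_def bilin_linear_combination bilin_sym[of g Y X, OF sym]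
    by (simp add: algebra_simps power2_eq_square)
  ultimately show ?thesis
    using gY by (simp add: zero_less_mult_iff)
qed

lemma tensor_eval_totally_symmetric:
  assumes B12: "\<And>a b j l. B a b j l = B b a j l" and B23: "\<And>a b j l. B a b j l = B a j b l"
    and B34: "\<And>a b j l. B a b j l = B a b l j"
  shows "tensor_eval B Y Y X X = tensor_eval B X X Y Y" "tensor_eval B Y X Y X = tensor_eval B X X Y Y"
    "tensor_eval B X Y Y X = tensor_eval B X X Y Y" "tensor_eval B X Y X Y = tensor_eval B X X Y Y"
    "tensor_eval B Y X X Y = tensor_eval B X X Y Y"
proof -
  have "tensor_eval B Y Y X X = tensor_eval B Y X Y X" "tensor_eval B Y X Y X = tensor_eval B X Y Y X"
    "tensor_eval B X Y Y X = tensor_eval B X Y X Y" "tensor_eval B X Y X Y = tensor_eval B X X Y Y"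
    "tensor_eval B Y X X Y = tensor_eval B X Y X Y"
    by (rule tensor_eval_swap23[OF B23] tensor_eval_swap12[OF B12] tensor_eval_swap34[OF B34])+
  then show "tensor_eval B Y Y X X = tensor_eval B X X Y Y" "tensor_eval B Y X Y X = tensor_eval B X X Y Y"
    "tensor_eval B X Y Y X = tensor_eval B X X Y Y" "tensor_eval B X Y X Y = tensor_eval B X X Y Y"
    "tensor_eval B Y X X Y = tensor_eval B X X Y Y"
    by simp_all
qed

lemma tensor_eval_pair_symmetric:
  assumes S12: "\<And>a b j l. S a b j l = S b a j l" and S34: "\<And>a b j l. S a b j l = S a b l j"
    and S_pairs: "\<And>a b j l. S a b j l = S j l a b"
  shows "tensor_eval S Y Y X X = tensor_eval S X X Y Y" "tensor_eval S X Y Y X = tensor_eval S X Y X Y"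
    "tensor_eval S Y X X Y = tensor_eval S X Y X Y" "tensor_eval S Y X Y X = tensor_eval S X Y X Y"
  using tensor_eval_swap12[of S Y X Y X, OF S12] tensor_eval_swap34[of S X Y Y X, OF S34]
    tensor_eval_swap12[of S Y X X Y, OF S12] tensor_eval_swap_pairs[of S Y Y X X, OF S_pairs]
  by simp_all

lemma polarization_hessian_curvature:
  fixes g :: "'n::finite \<Rightarrow> 'n \<Rightarrow> real" and B S :: "'n \<Rightarrow> 'n \<Rightarrow> 'n \<Rightarrow> 'n \<Rightarrow> real"
  assumes g_sym: "\<And>i j. g i j = g j i"
    and B12: "\<And>a b j l. B a b j l = B b a j l" and B23: "\<And>a b j l. B a b j l = B a j b l"
    and B34: "\<And>a b j l. B a b j l = B a b l j"
    and S12: "\<And>a b j l. S a b j l = S b a j l" and S34: "\<And>a b j l. S a b j l = S a b l j"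
    and S_pairs: "\<And>a b j l. S a b j l = S j l a b"
    and const: "\<And>\<xi>. sym_tensor \<xi> \<Longrightarrow> tensor_pair (\<lambda>a b j l. g a j * g b l) \<xi> \<xi> \<noteq> 0 \<Longrightarrow>
      tensor_pair (\<lambda>a b j l. (1/2) * B a b j l + (- 1/2) * S a b j l) \<xi> \<xi>
        = c * tensor_pair (\<lambda>a b j l. g a j * g b l) \<xi> \<xi>"
    and X: "bilin g X X > 0" and Y: "bilin g Y Y > 0"
  shows "tensor_eval S X X Y Y - tensor_eval S X Y X Y = c * (bilin g X X * bilin g Y Y - (bilin g X Y)\<^sup>2)"
proof -
  let ?K = "\<lambda>a b j l. (1/2) * B a b j l + (- 1/2) * S a b j l"
  have XY: "bilin g Y X = bilin g X Y"
    by (rule bilin_sym[OF g_sym])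
  have sym: "sym_tensor (\<lambda>a b. X a * X b)" "sym_tensor (\<lambda>a b. Y a * Y b)"
    "sym_tensor (\<lambda>a b. X a * X b + Y a * Y b)" "sym_tensor (\<lambda>a b. X a * Y b + Y a * X b)"
    unfolding sym_tensor_def by (auto simp: mult.commute add.commute)
  have "0 \<le> bilin g X Y * bilin g X Y"
    by simp
  note pos = this X Y mult_pos_pos[OF X Y] mult_pos_pos[OF X X] mult_pos_pos[OF Y Y]
  have E1: "tensor_eval ?K X X X X = c * (bilin g X X * bilin g X X)"
    using const[OF sym(1)] pos unfolding tensor_pair_rank_one tensor_eval_metric by simp
  have E2: "tensor_eval ?K Y Y Y Y = c * (bilin g Y Y * bilin g Y Y)"
    using const[OF sym(2)] pos unfolding tensor_pair_rank_one tensor_eval_metric by simp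
  have E3: "tensor_eval ?K X X X X + tensor_eval ?K X X Y Y + tensor_eval ?K Y Y X X + tensor_eval ?K Y Y Y Y
      = c * (bilin g X X * bilin g X X + bilin g X Y * bilin g X Y + bilin g Y X * bilin g Y X
             + bilin g Y Y * bilin g Y Y)"
    using const[OF sym(3)] pos unfolding tensor_pair_rank_two tensor_eval_metric XY by simp
  have E4: "tensor_eval ?K X Y X Y + tensor_eval ?K X Y Y X + tensor_eval ?K Y X X Y + tensor_eval ?K Y X Y X
      = c * (bilin g X X * bilin g Y Y + bilin g X Y * bilin g Y X + bilin g Y X * bilin g X Y
             + bilin g Y Y * bilin g X X)"
    using const[OF sym(4)] pos unfolding tensor_pair_rank_two tensor_eval_metric XY by simp
  from E1 E2 E3 E4 show ?thesis
    unfolding tensor_eval_linear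
    using tensor_eval_totally_symmetric[OF B12 B23 B34, where X=X and Y=Y]
      tensor_eval_pair_symmetric[OF S12 S34 S_pairs, where X=X and Y=Y]
    by (simp add: XY algebra_simps power2_eq_square)
qed

(* A Hessian metric at one point of an affine chart: g, its inverse G, and
   A i j k = d_k g_ij, B i j k l = d_l d_k g_ij (third and fourth derivatives of the potential). *)
locale hessian_jet =
  fixes g G :: "'n::finite \<Rightarrow> 'n \<Rightarrow> real" and A :: "'n \<Rightarrow> 'n \<Rightarrow> 'n \<Rightarrow> real"
    and B :: "'n \<Rightarrow> 'n \<Rightarrow> 'n \<Rightarrow> 'n \<Rightarrow> real"
  assumes g_sym: "g i j = g j i"
    and g_G: "(\<Sum>r\<in>UNIV. g i r * G r j) = (if i = j then 1 else 0)"
    and G_g: "(\<Sum>r\<in>UNIV. G i r * g r j) = (if i = j then 1 else 0)"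
    and A12: "A i j k = A j i k" and A13: "A i j k = A k j i"
    and B12: "B i j k l = B j i k l" and B13: "B i j k l = B k j i l"
    and B34: "B i j k l = B i j l k"
begin

definition christoffel :: "'n \<Rightarrow> 'n \<Rightarrow> 'n \<Rightarrow> real"
  where "christoffel i j k = (1/2) * (\<Sum>l\<in>UNIV. G i l * A l j k)"

(* d_m of the Christoffel symbols, using d_m g^il = - g^ia (d_m g_ab) g^bl. *)
definition christoffel_deriv :: "'n \<Rightarrow> 'n \<Rightarrow> 'n \<Rightarrow> 'n \<Rightarrow> real"
  where "christoffel_deriv m i j k = (1/2) * (\<Sum>l\<in>UNIV.
    (- (\<Sum>a\<in>UNIV. \<Sum>b\<in>UNIV. G i a * A a b m * G b l)) * A l j k + G i l * B l j k m)"

definition riemann :: "'n \<Rightarrow> 'n \<Rightarrow> 'n \<Rightarrow> 'n \<Rightarrow> real"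
  where "riemann i j k l = christoffel_deriv k i l j - christoffel_deriv l i k j
    + (\<Sum>m\<in>UNIV. christoffel i k m * christoffel m l j - christoffel i l m * christoffel m k j)"

definition AA :: "'n \<Rightarrow> 'n \<Rightarrow> 'n \<Rightarrow> 'n \<Rightarrow> real"
  where "AA a b j l = (\<Sum>r\<in>UNIV. \<Sum>s\<in>UNIV. A a b r * G r s * A s j l)"

lemma A23: "A i j k = A i k j"
  using A12 A13 by metis

lemma B23: "B i j k l = B i k j l"
  using B12 B13 by metis

lemma B24: "B i j k l = B i l k j"
  using B23 B34 by metis

lemma G_sym: "G i j = G j i"
proof -
  have "G j i = (\<Sum>r\<in>UNIV. G r i * (\<Sum>s\<in>UNIV. g r s * G s j))"
    by (simp add: g_G sum_kronecker)
  also have "\<dots> = (\<Sum>s\<in>UNIV. (\<Sum>r\<in>UNIV. G r i * g r s) * G s j)"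
    by (rule sum_swap_mult)
  also have "\<dots> = (\<Sum>s\<in>UNIV. (\<Sum>r\<in>UNIV. g s r * G r i) * G s j)"
  proof -
    have "(\<Sum>r\<in>UNIV. G r i * g r s) = (\<Sum>r\<in>UNIV. g s r * G r i)" for s
      by (rule sum.cong[OF refl]) (metis g_sym mult.commute)
    then show ?thesis
      by simp
  qed
  also have "\<dots> = G i j"
    by (simp add: g_G sum_kronecker)
  finally show ?thesis ..
qed

lemma lower_raise_cancel: "(\<Sum>i\<in>UNIV. g a i * (\<Sum>p\<in>UNIV. G i p * f p)) = f a"
proof -
  have "(\<Sum>i\<in>UNIV. g a i * (\<Sum>p\<in>UNIV. G i p * f p)) = (\<Sum>p\<in>UNIV. (\<Sum>i\<in>UNIV. g a i * G i p) * f p)"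
    by (rule sum_swap_mult)
  also have "\<dots> = f a"
    by (simp add: g_G sum_kronecker)
  finally show ?thesis .
qed

lemma christoffel_deriv_raised:
  "christoffel_deriv m i j k = (\<Sum>p\<in>UNIV. G i p * ((1/2) * (B p j k m - AA p m j k)))"
proof -
  have "(\<Sum>l\<in>UNIV. (- (\<Sum>a\<in>UNIV. \<Sum>b\<in>UNIV. G i a * A a b m * G b l)) * A l j k)
      = - (\<Sum>l\<in>UNIV. \<Sum>a\<in>UNIV. \<Sum>b\<in>UNIV. G i a * A a b m * G b l * A l j k)"
    by (simp add: sum_distrib_right sum_negf)
  also have "\<dots> = - (\<Sum>a\<in>UNIV. \<Sum>b\<in>UNIV. \<Sum>l\<in>UNIV. G i a * A a b m * G b l * A l j k)"
    by (subst sum_reverse3, subst sum.swap) simp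
  also have "\<dots> = - (\<Sum>a\<in>UNIV. G i a * AA a m j k)"
    unfolding AA_def by (simp add: sum_distrib_left A23[of _ m] mult.assoc)
  finally have "(\<Sum>l\<in>UNIV. (- (\<Sum>a\<in>UNIV. \<Sum>b\<in>UNIV. G i a * A a b m * G b l)) * A l j k)
      = - (\<Sum>a\<in>UNIV. G i a * AA a m j k)" .
  then have "christoffel_deriv m i j k
      = (1/2) * (- (\<Sum>a\<in>UNIV. G i a * AA a m j k) + (\<Sum>l\<in>UNIV. G i l * B l j k m))"
    unfolding christoffel_deriv_def sum.distrib by simp
  also have "\<dots> = (\<Sum>p\<in>UNIV. G i p * ((1/2) * (B p j k m - AA p m j k)))"
    unfolding sum_distrib_left right_diff_distrib sum_subtractf sum.distrib
    by (simp add: algebra_simps sum_divide_distrib)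
  finally show ?thesis .
qed

lemma lower_christoffel: "(\<Sum>i\<in>UNIV. g a i * christoffel i j k) = (1/2) * A a j k"
proof -
  have "(\<Sum>i\<in>UNIV. g a i * christoffel i j k) = (\<Sum>i\<in>UNIV. g a i * (\<Sum>p\<in>UNIV. G i p * ((1/2) * A p j k)))"
    unfolding christoffel_def by (simp add: sum_distrib_left mult_ac)
  also have "\<dots> = (1/2) * A a j k"
    by (rule lower_raise_cancel)
  finally show ?thesis .
qed

lemma lower_christoffel_deriv:
  "(\<Sum>i\<in>UNIV. g i a * christoffel_deriv m i j k) = (1/2) * (B a j k m - AA a m j k)"
  unfolding christoffel_deriv_raised g_sym[of _ a] by (rule lower_raise_cancel)

lemma christoffel_square: "(\<Sum>m\<in>UNIV. (1/2) * A a k m * christoffel m l j) = (1/4) * AA a k l j"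
  unfolding christoffel_def AA_def by (simp add: sum_distrib_left sum_distrib_right mult_ac)

lemma lower_riemann:
  "(\<Sum>i\<in>UNIV. g i a * riemann i j k l) = (1/4) * AA a l k j - (1/4) * AA a k l j"
proof -
  have sq: "(\<Sum>i\<in>UNIV. g i a * (\<Sum>m\<in>UNIV. christoffel i k m * christoffel m l j))
      = (\<Sum>m\<in>UNIV. (\<Sum>i\<in>UNIV. g a i * christoffel i k m) * christoffel m l j)" for k l
    by (subst sum_swap_mult) (auto simp: g_sym[of _ a])
  have "(\<Sum>i\<in>UNIV. g i a * riemann i j k l)
      = (\<Sum>i\<in>UNIV. g i a * christoffel_deriv k i l j) - (\<Sum>i\<in>UNIV. g i a * christoffel_deriv l i k j)
        + ((\<Sum>i\<in>UNIV. g i a * (\<Sum>m\<in>UNIV. christoffel i k m * christoffel m l j))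
           - (\<Sum>i\<in>UNIV. g i a * (\<Sum>m\<in>UNIV. christoffel i l m * christoffel m k j)))"
    unfolding riemann_def sum_subtractf[symmetric]
    by (simp only: distrib_left right_diff_distrib sum.distrib sum_subtractf)
  also have "\<dots> = (1/4) * AA a l k j - (1/4) * AA a k l j"
    unfolding sq lower_christoffel lower_christoffel_deriv christoffel_square
    using B24[of a l j k] by (simp add: field_simps)
  finally show ?thesis .
qed

lemma sectional_curvature_numerator:
  "(\<Sum>a\<in>UNIV. \<Sum>i\<in>UNIV. \<Sum>j\<in>UNIV. \<Sum>k\<in>UNIV. \<Sum>l\<in>UNIV. g i a * riemann i j k l * X k * Y l * Y j * X a)
   = (1/4) * (tensor_eval AA X Y X Y - tensor_eval AA X X Y Y)"
proof -
  have XYXY: "tensor_eval AA X Y X Y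
      = (\<Sum>a\<in>UNIV. \<Sum>j\<in>UNIV. \<Sum>k\<in>UNIV. \<Sum>l\<in>UNIV. AA a l k j * (X k * Y l * Y j * X a))"
    unfolding tensor_eval_def by (rule sum.cong[OF refl], rule trans[OF sum_reverse3]) (simp add: mult_ac)
  have XXYY: "tensor_eval AA X X Y Y
      = (\<Sum>a\<in>UNIV. \<Sum>j\<in>UNIV. \<Sum>k\<in>UNIV. \<Sum>l\<in>UNIV. AA a k l j * (X k * Y l * Y j * X a))"
    unfolding tensor_eval_def
    by (rule sum.cong[OF refl], rule trans[OF sum_rotate3], rule trans[OF sum_rotate3]) (simp add: mult_ac)
  have "(\<Sum>a\<in>UNIV. \<Sum>i\<in>UNIV. \<Sum>j\<in>UNIV. \<Sum>k\<in>UNIV. \<Sum>l\<in>UNIV. g i a * riemann i j k l * X k * Y l * Y j * X a)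
     = (\<Sum>a\<in>UNIV. \<Sum>j\<in>UNIV. \<Sum>k\<in>UNIV. \<Sum>l\<in>UNIV. (\<Sum>i\<in>UNIV. g i a * riemann i j k l) * (X k * Y l * Y j * X a))"
    by (rule sum.cong[OF refl], subst sum_rotate4) (simp add: sum_distrib_right mult.assoc)
  also have "\<dots> = (\<Sum>a\<in>UNIV. \<Sum>j\<in>UNIV. \<Sum>k\<in>UNIV. \<Sum>l\<in>UNIV.
      ((1/4) * AA a l k j - (1/4) * AA a k l j) * (X k * Y l * Y j * X a))"
    by (simp only: lower_riemann)
  also have "\<dots> = (1/4) * (tensor_eval AA X Y X Y - tensor_eval AA X X Y Y)"
    unfolding XYXY XXYY by (simp add: sum_subtractf sum_distrib_left left_diff_distrib right_diff_distrib mult.assoc)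
  finally show ?thesis .
qed

lemma lower_raised_christoffel_deriv:
  "(\<Sum>k\<in>UNIV. g k b * (\<Sum>j\<in>UNIV. \<Sum>l\<in>UNIV. (\<Sum>m\<in>UNIV. christoffel_deriv m i j l * G m k) * \<xi> j l))
   = (\<Sum>j\<in>UNIV. \<Sum>l\<in>UNIV. christoffel_deriv b i j l * \<xi> j l)"
proof -
  define D where "D m = (\<Sum>j\<in>UNIV. \<Sum>l\<in>UNIV. christoffel_deriv m i j l * \<xi> j l)" for m
  have raised: "(\<Sum>j\<in>UNIV. \<Sum>l\<in>UNIV. (\<Sum>m\<in>UNIV. christoffel_deriv m i j l * G m k) * \<xi> j l)
      = (\<Sum>m\<in>UNIV. G k m * D m)" for k
  proof -
    have "(\<Sum>j\<in>UNIV. \<Sum>l\<in>UNIV. (\<Sum>m\<in>UNIV. christoffel_deriv m i j l * G m k) * \<xi> j l)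
        = (\<Sum>j\<in>UNIV. \<Sum>l\<in>UNIV. \<Sum>m\<in>UNIV. G k m * (christoffel_deriv m i j l * \<xi> j l))"
      by (simp add: sum_distrib_right sum_distrib_left G_sym[of _ k] mult_ac)
    also have "\<dots> = (\<Sum>m\<in>UNIV. G k m * D m)"
      unfolding D_def sum_distrib_left by (rule trans[OF sum_rotate3 sum_rotate3])
    finally show ?thesis .
  qed
  have "(\<Sum>k\<in>UNIV. g k b * (\<Sum>j\<in>UNIV. \<Sum>l\<in>UNIV. (\<Sum>m\<in>UNIV. christoffel_deriv m i j l * G m k) * \<xi> j l))
      = (\<Sum>k\<in>UNIV. g b k * (\<Sum>m\<in>UNIV. G k m * D m))"
    by (simp only: raised g_sym[of _ b])
  also have "\<dots> = D b"
    by (rule lower_raise_cancel)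
  finally show ?thesis
    unfolding D_def .
qed

lemma lower_christoffel_deriv_contracted:
  "(\<Sum>i\<in>UNIV. g i a * (\<Sum>j\<in>UNIV. \<Sum>l\<in>UNIV. christoffel_deriv b i j l * \<xi> j l))
   = (\<Sum>j\<in>UNIV. \<Sum>l\<in>UNIV. ((1/2) * B a b j l + (- 1/2) * AA a b j l) * \<xi> j l)"
proof -
  have "(\<Sum>i\<in>UNIV. g i a * (\<Sum>j\<in>UNIV. \<Sum>l\<in>UNIV. christoffel_deriv b i j l * \<xi> j l))
      = (\<Sum>j\<in>UNIV. \<Sum>l\<in>UNIV. (\<Sum>i\<in>UNIV. g i a * christoffel_deriv b i j l) * \<xi> j l)"
    unfolding sum_distrib_left sum_distrib_right by (subst sum_rotate3) (simp add: mult.assoc)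
  moreover have "B a j l b = B a b j l" for j l
    using B34[of a j l b] B23[of a b j l] by simp
  ultimately show ?thesis
    by (simp add: lower_christoffel_deriv algebra_simps)
qed

lemma hessian_curvature_numerator:
  "(\<Sum>i\<in>UNIV. \<Sum>k\<in>UNIV. \<Sum>a\<in>UNIV. \<Sum>b\<in>UNIV. g i a * g k b *
      (\<Sum>j\<in>UNIV. \<Sum>l\<in>UNIV. (\<Sum>m\<in>UNIV. christoffel_deriv m i j l * G m k) * \<xi> j l) * \<xi> a b)
   = tensor_pair (\<lambda>a b j l. (1/2) * B a b j l + (- 1/2) * AA a b j l) \<xi> \<xi>"
proof -
  have "(\<Sum>i\<in>UNIV. \<Sum>k\<in>UNIV. \<Sum>a\<in>UNIV. \<Sum>b\<in>UNIV. g i a * g k b *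
      (\<Sum>j\<in>UNIV. \<Sum>l\<in>UNIV. (\<Sum>m\<in>UNIV. christoffel_deriv m i j l * G m k) * \<xi> j l) * \<xi> a b)
      = (\<Sum>i\<in>UNIV. \<Sum>a\<in>UNIV. \<Sum>b\<in>UNIV. (g i a * \<xi> a b) * (\<Sum>k\<in>UNIV. g k b *
      (\<Sum>j\<in>UNIV. \<Sum>l\<in>UNIV. (\<Sum>m\<in>UNIV. christoffel_deriv m i j l * G m k) * \<xi> j l)))"
    by (rule sum.cong[OF refl], rule trans[OF sum_rotate3]) (simp add: sum_distrib_left mult_ac)
  also have "\<dots> = (\<Sum>a\<in>UNIV. \<Sum>b\<in>UNIV. \<xi> a b *
      (\<Sum>i\<in>UNIV. g i a * (\<Sum>j\<in>UNIV. \<Sum>l\<in>UNIV. christoffel_deriv b i j l * \<xi> j l)))"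
    unfolding lower_raised_christoffel_deriv
    by (rule trans[OF sum_rotate3]) (simp add: sum_distrib_left mult_ac)
  also have "\<dots> = tensor_pair (\<lambda>a b j l. (1/2) * B a b j l + (- 1/2) * AA a b j l) \<xi> \<xi>"
    unfolding lower_christoffel_deriv_contracted tensor_pair_def by (simp add: sum_distrib_left mult_ac)
  finally show ?thesis .
qed

lemma AA12: "AA a b j l = AA b a j l"
  unfolding AA_def using A12[of a b] by simp

lemma AA34: "AA a b j l = AA a b l j"
  unfolding AA_def using A23 by simp

lemma AA_pairs: "AA a b j l = AA j l a b"
proof -
  have "AA j l a b = (\<Sum>s\<in>UNIV. \<Sum>r\<in>UNIV. A j l r * G r s * A s a b)"
    unfolding AA_def by (rule sum.swap)
  also have "\<dots> = AA a b j l"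
    unfolding AA_def by (intro sum.cong refl) (metis A12 A13 G_sym mult.commute mult.assoc)
  finally show ?thesis ..
qed

lemma sectional_curvature_of_constant_hessian_curvature:
  assumes pos: "\<And>v. v \<noteq> (\<lambda>_. 0) \<Longrightarrow> bilin g v v > 0"
    and const: "\<And>\<xi>. sym_tensor \<xi> \<Longrightarrow> \<xi> \<noteq> (\<lambda>i j. 0) \<Longrightarrow>
      tensor_pair (\<lambda>a b j l. (1/2) * B a b j l + (- 1/2) * AA a b j l) \<xi> \<xi>
        / tensor_pair (\<lambda>a b j l. g a j * g b l) \<xi> \<xi> = c"
    and Y: "Y \<noteq> (\<lambda>_. 0)" and indep: "\<And>t. X \<noteq> (\<lambda>i. t * Y i)"
  shows "(\<Sum>a\<in>UNIV. \<Sum>i\<in>UNIV. \<Sum>j\<in>UNIV. \<Sum>k\<in>UNIV. \<Sum>l\<in>UNIV. g i a * riemann i j k l * X k * Y l * Y j * X a)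
      / (bilin g X X * bilin g Y Y - (bilin g X Y)\<^sup>2) = - c / 4"
proof -
  have X: "X \<noteq> (\<lambda>_. 0)"
    using indep[of 0] by simp
  have gram: "bilin g X X * bilin g Y Y - (bilin g X Y)\<^sup>2 > 0"
    using bilin_gram_pos[OF g_sym pos Y indep] by blast
  have "tensor_eval AA X X Y Y - tensor_eval AA X Y X Y = c * (bilin g X X * bilin g Y Y - (bilin g X Y)\<^sup>2)"
  proof (rule polarization_hessian_curvature[OF g_sym B12 B23 B34 AA12 AA34 AA_pairs])
    fix \<xi> :: "'n \<Rightarrow> 'n \<Rightarrow> real"
    assume sym: "sym_tensor \<xi>" and nonzero: "tensor_pair (\<lambda>a b j l. g a j * g b l) \<xi> \<xi> \<noteq> 0"
    then have "\<xi> \<noteq> (\<lambda>i j. 0)"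
      by (auto simp: tensor_pair_def)
    with const[OF sym] nonzero
    show "tensor_pair (\<lambda>a b j l. (1/2) * B a b j l + (- 1/2) * AA a b j l) \<xi> \<xi>
        = c * tensor_pair (\<lambda>a b j l. g a j * g b l) \<xi> \<xi>"
      by (simp add: divide_eq_eq)
  qed (use pos X Y in auto)
  then show ?thesis
    unfolding sectional_curvature_numerator using gram by (simp add: field_simps)
qed

end

lemma gam_eq_LC: "gam G i j k = LC G i j k"
  by (simp add: gam_def fun_eq_iff)

locale hessian_chart =
  fixes h :: "real^'n::finite \<Rightarrow> real" and U :: "(real^'n) set"
  assumes open_U: "open U" and smooth_h: "smooth_on U h"
    and metric_pos: "\<And>y v. y \<in> U \<Longrightarrow> v \<noteq> 0 \<Longrightarrow> gform (hess_metric h) y v v > 0"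
begin

abbreviation g :: "'n \<Rightarrow> 'n \<Rightarrow> real^'n \<Rightarrow> real"
  where "g \<equiv> hess_metric h"

lemma smooth_metric: "smooth_on U (g i j)"
  unfolding hess_metric_def by (intro smooth_on_pd smooth_h)

lemma metric_differentiable: "y \<in> U \<Longrightarrow> g i j differentiable (at y)"
  by (rule smooth_on_differentiable_at[OF open_U smooth_metric])

lemma metric_deriv_differentiable: "y \<in> U \<Longrightarrow> pd k (g i j) differentiable (at y)"
  by (rule smooth_on_differentiable_at[OF open_U smooth_on_pd[OF smooth_metric]])

lemma metric_sym: "x \<in> U \<Longrightarrow> g i j x = g j i x"
  unfolding hess_metric_def by (rule pd_commute[OF open_U smooth_h])

lemma metric_deriv_sym:
  assumes "x \<in> U"
  shows "pd k (g i j) x = pd k (g j i) x" and "pd k (g i j) x = pd i (g k j) x"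
proof -
  show "pd k (g i j) x = pd k (g j i) x"
    by (rule pd_cong_open[OF open_U assms metric_sym])
  show "pd k (g i j) x = pd i (g k j) x"
    unfolding hess_metric_def by (rule pd_commute[OF open_U smooth_on_pd[OF smooth_h] assms])
qed

lemma metric_deriv2_sym:
  assumes "y \<in> U"
  shows "pd l (pd k (g i j)) y = pd l (pd k (g j i)) y"
    and "pd l (pd k (g i j)) y = pd l (pd i (g k j)) y"
    and "pd l (pd k (g i j)) y = pd k (pd l (g i j)) y"
  by (intro pd_cong_open[OF open_U assms] metric_deriv_sym, assumption)+
    (rule pd_commute[OF open_U smooth_metric assms])

lemma metric_mat_inverse:
  assumes "x \<in> U"
  shows "metric_mat g x ** matrix_inv (metric_mat g x) = mat 1"
    and "matrix_inv (metric_mat g x) ** metric_mat g x = mat 1"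
proof -
  have injective: "v = 0" if "metric_mat g x *v v = 0" for v
    using metric_pos[OF assms, of v] that by (auto simp: gform_eq_inner)
  show "metric_mat g x ** matrix_inv (metric_mat g x) = mat 1"
    using injective by (rule matrix_inv_two_sided(1))
  show "matrix_inv (metric_mat g x) ** metric_mat g x = mat 1"
    using injective by (rule matrix_inv_two_sided(2))
qed

lemma det_metric_mat_nonzero: "x \<in> U \<Longrightarrow> det (metric_mat g x) \<noteq> 0"
  using metric_mat_inverse invertible_def invertible_det_nz by blast

lemma metric_inverse:
  assumes "x \<in> U"
  shows "(\<Sum>r\<in>UNIV. g i r x * ginv g r j x) = (if i = j then 1 else 0)"
    and "(\<Sum>r\<in>UNIV. ginv g i r x * g r j x) = (if i = j then 1 else 0)"
proof -
  from arg_cong[where f="\<lambda>M. M $ i $ j", OF metric_mat_inverse(1)[OF assms]]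
  show "(\<Sum>r\<in>UNIV. g i r x * ginv g r j x) = (if i = j then 1 else 0)"
    unfolding matrix_matrix_mult_def ginv_def metric_mat_def mat_def by simp
  from arg_cong[where f="\<lambda>M. M $ i $ j", OF metric_mat_inverse(2)[OF assms]]
  show "(\<Sum>r\<in>UNIV. ginv g i r x * g r j x) = (if i = j then 1 else 0)"
    unfolding matrix_matrix_mult_def ginv_def metric_mat_def mat_def by simp
qed

lemma ginv_differentiable:
  assumes y: "y \<in> U"
  shows "ginv g i j differentiable (at y)"
proof -
  define F where "F x = det (\<chi> a b. if b = i then axis j 1 $ a else g a b x) / det (\<chi> a b. g a b x)" for x
  have "F x = ginv g i j x" if "x \<in> U" for x
  proof -
    have "(\<chi> a b. if b = i then axis j 1 $ a else metric_mat g x $ a $ b)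
        = (\<chi> a b. if b = i then axis j 1 $ a else g a b x)"
      unfolding metric_mat_def by (simp add: vec_eq_iff)
    then show ?thesis
      using matrix_inv_cramer[OF metric_mat_inverse(1)[OF that] det_metric_mat_nonzero[OF that], of i j]
      unfolding F_def ginv_def by (simp add: metric_mat_def)
  qed
  moreover have "F differentiable (at y)"
  proof -
    have "(\<lambda>x. if b = i then axis j 1 $ a else g a b x) differentiable (at y)" for a b
      by (cases "b = i") (simp_all add: metric_differentiable[OF y])
    then have "(\<lambda>x. det (\<chi> a b. if b = i then axis j 1 $ a else g a b x)) differentiable (at y)"
      by (rule differentiable_det)
    moreover have "(\<lambda>x. det (\<chi> a b. g a b x)) differentiable (at y)"
      by (rule differentiable_det, rule metric_differentiable[OF y])
    ultimately show ?thesis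
      using det_metric_mat_nonzero[OF y] unfolding F_def metric_mat_def
      by (intro differentiable_divide) auto
  qed
  ultimately show ?thesis
    unfolding differentiable_def using has_derivative_transform_within_open[OF _ open_U y] by metis
qed

(* Differentiate g^ir g_rj = delta^i_j. *)
lemma pd_ginv:
  assumes y: "y \<in> U"
  shows "pd k (ginv g i m) y = - (\<Sum>a\<in>UNIV. \<Sum>b\<in>UNIV. ginv g i a y * pd k (g a b) y * ginv g b m y)"
proof -
  let ?dG = "\<lambda>r. pd k (ginv g i r) y"
  have deriv_delta: "(\<Sum>r\<in>UNIV. ?dG r * g r j y) = - (\<Sum>r\<in>UNIV. ginv g i r y * pd k (g r j) y)" for j
  proof -
    have diff: "(\<lambda>x. ginv g i r x * g r j x) differentiable (at y)" for r
      by (intro differentiable_mult ginv_differentiable[OF y] metric_differentiable[OF y])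
    have "0 = pd k (\<lambda>x. if i = j then 1 else 0) y"
      by (rule pd_const[symmetric])
    also have "\<dots> = pd k (\<lambda>x. \<Sum>r\<in>UNIV. ginv g i r x * g r j x) y"
      by (rule pd_cong_open[OF open_U y]) (simp add: metric_inverse)
    also have "\<dots> = (\<Sum>r\<in>UNIV. ?dG r * g r j y + ginv g i r y * pd k (g r j) y)"
      by (simp add: pd_sum diff pd_mult ginv_differentiable[OF y] metric_differentiable[OF y])
    finally show ?thesis
      by (simp add: sum.distrib eq_neg_iff_add_eq_0)
  qed
  have "?dG m = (\<Sum>r\<in>UNIV. ?dG r * (\<Sum>j\<in>UNIV. g r j y * ginv g j m y))"
    by (simp add: metric_inverse[OF y] sum_kronecker)
  also have "\<dots> = (\<Sum>j\<in>UNIV. (\<Sum>r\<in>UNIV. ?dG r * g r j y) * ginv g j m y)"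
    by (rule sum_swap_mult)
  also have "\<dots> = - (\<Sum>j\<in>UNIV. \<Sum>r\<in>UNIV. ginv g i r y * pd k (g r j) y * ginv g j m y)"
    by (simp add: deriv_delta sum_distrib_right sum_negf)
  also have "\<dots> = - (\<Sum>a\<in>UNIV. \<Sum>b\<in>UNIV. ginv g i a y * pd k (g a b) y * ginv g b m y)"
    by (subst sum.swap) (rule refl)
  finally show ?thesis .
qed

lemma LC_hessian:
  assumes x: "x \<in> U"
  shows "LC g i j k x = (1/2) * (\<Sum>l\<in>UNIV. ginv g i l x * pd k (g l j) x)"
proof -
  have "pd j (g l k) x = pd k (g l j) x" and "pd l (g j k) x = pd k (g l j) x" for l
    by (metis metric_deriv_sym[OF x])+
  then show ?thesis
    unfolding LC_def by simp
qed

lemma pd_LC_hessian: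
  assumes y: "y \<in> U"
  shows "pd m (LC g i j k) y = (1/2) * (\<Sum>l\<in>UNIV.
    pd m (ginv g i l) y * pd k (g l j) y + ginv g i l y * pd m (pd k (g l j)) y)"
proof -
  have diff: "(\<lambda>x. ginv g i l x * pd k (g l j) x) differentiable (at y)" for l
    by (intro differentiable_mult ginv_differentiable[OF y] metric_deriv_differentiable[OF y])
  have "pd m (LC g i j k) y = pd m (\<lambda>x. (1/2) * (\<Sum>l\<in>UNIV. ginv g i l x * pd k (g l j) x)) y"
    by (rule pd_cong_open[OF open_U y]) (simp add: LC_hessian)
  also have "\<dots> = (1/2) * (\<Sum>l\<in>UNIV. pd m (\<lambda>x. ginv g i l x * pd k (g l j) x) y)"
    by (subst pd_cmult) (simp_all add: diff pd_sum[OF diff])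
  also have "\<dots> = (1/2) * (\<Sum>l\<in>UNIV. pd m (ginv g i l) y * pd k (g l j) y + ginv g i l y * pd m (pd k (g l j)) y)"
    by (simp add: pd_mult ginv_differentiable[OF y] metric_deriv_differentiable[OF y])
  finally show ?thesis .
qed

lemma hessian_jet_at:
  assumes "y \<in> U"
  shows "hessian_jet (\<lambda>i j. g i j y) (\<lambda>i j. ginv g i j y) (\<lambda>i j k. pd k (g i j) y)
    (\<lambda>i j k l. pd l (pd k (g i j)) y)"
  by unfold_locales
    (fact metric_sym[OF assms] metric_inverse[OF assms] metric_deriv_sym[OF assms] metric_deriv2_sym[OF assms])+

end

locale hessian_chart_point = hessian_chart +
  fixes y
  assumes y_in_U: "y \<in> U"
begin

sublocale J: hessian_jet "\<lambda>i j. g i j y" "\<lambda>i j. ginv g i j y" "\<lambda>i j k. pd k (g i j) y"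
  "\<lambda>i j k l. pd l (pd k (g i j)) y"
  by (rule hessian_jet_at[OF y_in_U])

lemma LC_eq_christoffel: "LC g i j k y = J.christoffel i j k"
  by (simp add: LC_hessian[OF y_in_U] J.christoffel_def)

lemma pd_LC_eq_christoffel_deriv: "pd m (LC g i j k) y = J.christoffel_deriv m i j k"
  by (simp add: pd_LC_hessian[OF y_in_U] pd_ginv[OF y_in_U] J.christoffel_deriv_def)

lemma Rm_eq_riemann: "Rm g i j k l y = J.riemann i j k l"
  by (simp add: Rm_def J.riemann_def LC_eq_christoffel pd_LC_eq_christoffel_deriv)

lemma gform_eq_bilin: "gform g y P Q = bilin (\<lambda>i j. g i j y) (($) P) (($) Q)"
  by (simp add: gform_def bilin_def)

lemma hess_sec_curv_eq:
  "hess_sec_curv g y \<xi>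
   = tensor_pair (\<lambda>a b j l. (1/2) * pd l (pd j (g a b)) y + (- 1/2) * J.AA a b j l) \<xi> \<xi>
     / tensor_pair (\<lambda>a b j l. g a j y * g b l y) \<xi> \<xi>"
  unfolding hess_sec_curv_def tinner_def Qhat_def Qup_def Qt_def gam_eq_LC pd_LC_eq_christoffel_deriv
    J.hessian_curvature_numerator
  by (simp add: tensor_pair_def)

lemma bilin_pos: "v \<noteq> (\<lambda>_. 0) \<Longrightarrow> bilin (\<lambda>i j. g i j y) v v > 0"
  using metric_pos[OF y_in_U, of "\<chi> i. v i"]
  by (simp add: gform_eq_bilin vec_lambda_inverse vec_eq_iff fun_eq_iff)

lemma sec_curv_of_constant_hess_sec_curv:
  assumes const: "\<forall>\<xi>. sym_tensor \<xi> \<and> \<xi> \<noteq> (\<lambda>i j. 0) \<longrightarrow> hess_sec_curv g y \<xi> = c"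
    and XY: "independent {X, Y}" "X \<noteq> Y"
  shows "sec_curv g y X Y = - c / 4"
proof -
  have "Y \<noteq> 0" and "X \<noteq> t *\<^sub>R Y" for t
    using XY by (auto simp: independent_insert span_singleton)
  then have Y: "(\<lambda>i. Y $ i) \<noteq> (\<lambda>_. 0)" and indep: "(\<lambda>i. X $ i) \<noteq> (\<lambda>i. t * Y $ i)" for t
    by (simp_all add: vec_eq_iff fun_eq_iff)
  have "(\<Sum>a\<in>UNIV. \<Sum>i\<in>UNIV. \<Sum>j\<in>UNIV. \<Sum>k\<in>UNIV. \<Sum>l\<in>UNIV.
      g i a y * J.riemann i j k l * X $ k * Y $ l * Y $ j * X $ a)
      / (bilin (\<lambda>i j. g i j y) (($) X) (($) X) * bilin (\<lambda>i j. g i j y) (($) Y) (($) Y)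
         - (bilin (\<lambda>i j. g i j y) (($) X) (($) Y))\<^sup>2) = - c / 4"
    by (rule J.sectional_curvature_of_constant_hessian_curvature[OF bilin_pos _ Y indep])
      (use const hess_sec_curv_eq in auto)
  then show ?thesis
    unfolding sec_curv_def Rm_eq_riemann gform_eq_bilin .
qed

end

theorem corollary2:
  fixes h :: "real^'n \<Rightarrow> real" and U :: "(real^'n) set" and c :: real
  assumes "open U"
    and "smooth_on U h"
    and "\<forall>y\<in>U. \<forall>v::real^'n. v \<noteq> 0 \<longrightarrow> gform (hess_metric h) y v v > 0"
    and "\<forall>y\<in>U. \<forall>\<xi>. sym_tensor \<xi> \<and> \<xi> \<noteq> (\<lambda>i j. 0) \<longrightarrow>
           hess_sec_curv (hess_metric h) y \<xi> = c"
  shows "\<forall>y\<in>U. \<forall>X Y::real^'n. independent {X, Y} \<and> X \<noteq> Y \<longrightarrow>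
           sec_curv (hess_metric h) y X Y = - c / 4"
proof (intro ballI allI impI)
  fix y and X Y :: "real^'n"
  assume y: "y \<in> U" and XY: "independent {X, Y} \<and> X \<noteq> Y"
  interpret hessian_chart_point h U y
    using assms(1-3) y by unfold_locales auto
  show "sec_curv (hess_metric h) y X Y = - c / 4"
    using sec_curv_of_constant_hess_sec_curv assms(4) y XY by blast
qed

end
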